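(* In the single-node mining process with $\phi(s)=\log_2 s$ and $R\ge2$, the expected total number of hash attempts needed for the node to build a block-chain of length $L\ge1$ is at most $$D_s\sum_{n=0}^{L-1}\frac{1}{\log_2(n+1)+\log_2R}.$$
   Context: Fix real parameters $M>0$ (scale of the system), $R\ge 2$ (the stake reward StakRwd), $0<D_c\le D_s$ (coin-issue difficulty constant CoinD and stake-issue difficulty constant StakD). Put $p=D_c/D_s$, $q=1-p$. Single-node mining process with threshold function $\phi$: a node, who makes no stake transactions with anybody, starts with stake $S_0=0$. For $n=0,1,2,\dots$ the $(n+1)$-th block is produced as follows: the node makes successive hash attempts, each producing a hash value uniformly distributed on $[0,M]$, independent of all previous randomness; the block is created at the first attempt whose hash $h$ satisfies $h\le M\phi(R+S_n)/D_c$ (the coin-issue threshold), and then $S_{n+1}=S_n+R$ if moreover $h\le M\phi(R+S_n)/D_s$ (the stake-issue threshold), otherwise $S_{n+1}=S_n$. Assume $0<\phi(R+S)\le D_c$ for all $S\in\{0,R,2R,\dots,(L-1)R\}$. Time is measured as the total number of hash attempts. In this statement $\phi(s)=\log_2 s$ (logarithmic stake system). *)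

theory Defs
  imports "HOL-Probability.Probability"
begin

text \<open>A run is determined by the sequence h of hash values (h i is the hash of attempt i).
  mining_state phi M R Dc Ds h i = (number of blocks built, current stake) after i attempts.\<close>

fun mining_state ::
  "(real \<Rightarrow> real) \<Rightarrow> real \<Rightarrow> real \<Rightarrow> real \<Rightarrow> real \<Rightarrow> (nat \<Rightarrow> real) \<Rightarrow> nat \<Rightarrow> nat \<times> real" where
  "mining_state phi M R Dc Ds h 0 = (0, 0)"
| "mining_state phi M R Dc Ds h (Suc i) =
     (let (n, S) = mining_state phi M R Dc Ds h i in
      if h i \<le> M * phi (R + S) / Dc
      then (Suc n, if h i \<le> M * phi (R + S) / Ds then S + R else S)
      else (n, S))"

definition mining_time ::
  "(real \<Rightarrow> real) \<Rightarrow> real \<Rightarrow> real \<Rightarrow> real \<Rightarrow> real \<Rightarrow> nat \<Rightarrow> (nat \<Rightarrow> real) \<Rightarrow> ennreal" where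
  "mining_time phi M R Dc Ds L h =
     (if \<exists>i. L \<le> fst (mining_state phi M R Dc Ds h i)
      then of_nat (LEAST i. L \<le> fst (mining_state phi M R Dc Ds h i))
      else \<infinity>)"

definition hash_space :: "real \<Rightarrow> (nat \<Rightarrow> real) measure" where
  "hash_space M = PiM UNIV (\<lambda>_. uniform_measure lborel {0..M})"

end

theory Submission
  imports Defs
begin

text \<open>Let \<open>T k S\<close> be the expected number of attempts needed to build \<open>k\<close> more blocks from
  stake \<open>S\<close>, and \<open>p = \<phi>(R + S)\<close>. Conditioning on the first hash gives the recursion
  \<open>T k S = 1 + (p/D\<^sub>s) T (k-1) (S+R) + (p/D\<^sub>c - p/D\<^sub>s) T (k-1) S + (1 - p/D\<^sub>c) T k S\<close>,
  and \<open>B k S = D\<^sub>s \<Sum>\<^sub>n\<^sub><\<^sub>k 1/\<phi>(R(n+1) + S)\<close> is a supersolution of it: the difference is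
  \<open>(D\<^sub>s/D\<^sub>c - 1) p / \<phi>(Rk + S) \<ge> 0\<close>. Applying the recursion to the mining time truncated after
  \<open>N\<close> attempts gives \<open>T \<le> B\<close> by induction on \<open>N\<close>, and monotone convergence removes the
  truncation. For \<open>\<phi> = log\<^sub>2\<close> and \<open>S = 0\<close> one has \<open>\<phi>(R(n+1)) = log\<^sub>2(n+1) + log\<^sub>2 R\<close>.\<close>

lemma prob_space_hash_space: "M > 0 \<Longrightarrow> prob_space (hash_space M)"
  unfolding hash_space_def by (intro prob_space_PiM prob_space_uniform_measure) auto

lemma nn_integral_hash_space_case_nat:
  assumes M: "M > 0" and f[measurable]: "f \<in> borel_measurable (hash_space M)"
  shows "(\<integral>\<^sup>+h. f h \<partial>hash_space M) =
     (\<integral>\<^sup>+x. (\<integral>\<^sup>+h. f (case_nat x h) \<partial>hash_space M) \<partial>uniform_measure lborel {0..M})"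
proof -
  let ?U = "uniform_measure lborel {0..M}"
  interpret U: prob_space ?U by (rule prob_space_uniform_measure) (use M in auto)
  interpret S: sequence_space ?U by unfold_locales
  have f'[measurable]: "f \<in> borel_measurable (PiM UNIV (\<lambda>_. ?U))"
    using f by (simp add: hash_space_def)
  have "(\<integral>\<^sup>+h. f h \<partial>hash_space M) =
      (\<integral>\<^sup>+h. f h \<partial>distr (?U \<Otimes>\<^sub>M PiM UNIV (\<lambda>_. ?U)) (PiM UNIV (\<lambda>_. ?U)) (\<lambda>(s, \<omega>). case_nat s \<omega>))"
    unfolding hash_space_def S.PiM_iter ..
  also have "\<dots> = (\<integral>\<^sup>+p. f (case_nat (fst p) (snd p)) \<partial>(?U \<Otimes>\<^sub>M PiM UNIV (\<lambda>_. ?U)))"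
    by (subst nn_integral_distr) (auto simp: split_beta')
  also have "\<dots> = (\<integral>\<^sup>+x. (\<integral>\<^sup>+h. f (case_nat x h) \<partial>hash_space M) \<partial>?U)"
    using S.nn_integral_fst[of "\<lambda>p. f (case_nat (fst p) (snd p))"] by (simp add: hash_space_def)
  finally show ?thesis .
qed

lemma emeasure_uniform_interval_pieces:
  assumes "M > 0" "0 \<le> a" "a \<le> b" "b \<le> M"
  shows "emeasure (uniform_measure lborel {0..M}) {..a} = ennreal (a / M)"
    and "emeasure (uniform_measure lborel {0..M}) {a<..b} = ennreal ((b - a) / M)"
    and "emeasure (uniform_measure lborel {0..M}) {b<..} = ennreal ((M - b) / M)"
proof -
  have "{0..M} \<inter> {..a} = {0..a}" "{0..M} \<inter> {a<..b} = {a<..b}" "{0..M} \<inter> {b<..} = {b<..M}"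
    using assms by auto
  then show "emeasure (uniform_measure lborel {0..M}) {..a} = ennreal (a / M)"
    and "emeasure (uniform_measure lborel {0..M}) {a<..b} = ennreal ((b - a) / M)"
    and "emeasure (uniform_measure lborel {0..M}) {b<..} = ennreal ((M - b) / M)"
    using assms by (simp_all add: divide_ennreal)
qed

lemma measurable_hash_space_shift:
  "(\<lambda>h j. h (Suc j)) \<in> measurable (hash_space M) (hash_space M)"
  unfolding hash_space_def
  by (intro measurable_PiM_single') (auto simp: space_PiM intro!: measurable_component_singleton)

lemma measurable_hash_space_head: "(\<lambda>h. h 0) \<in> borel_measurable (hash_space M)"
  unfolding hash_space_def by measurable

context
  fixes phi :: "real \<Rightarrow> real" and M R Dc Ds :: real
begin

definition mining_step :: "nat \<times> real \<Rightarrow> real \<Rightarrow> nat \<times> real" where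
  "mining_step s x = (case s of (n, S) \<Rightarrow>
      if x \<le> M * phi (R + S) / Dc
      then (Suc n, if x \<le> M * phi (R + S) / Ds then S + R else S)
      else (n, S))"

text \<open>Unlike \<open>mining_state\<close>, the run starts from an arbitrary state and consumes the
  hashes from the front, so that its first step can be split off.\<close>

fun mining_run :: "nat \<times> real \<Rightarrow> (nat \<Rightarrow> real) \<Rightarrow> nat \<Rightarrow> nat \<times> real" where
  "mining_run s h 0 = s"
| "mining_run s h (Suc i) = mining_run (mining_step s (h 0)) (\<lambda>j. h (Suc j)) i"

lemma mining_run_Suc_last: "mining_run s h (Suc i) = mining_step (mining_run s h i) (h i)"
proof (induction i arbitrary: s h)
  case (Suc i)
  have "mining_run s h (Suc (Suc i)) = mining_run (mining_step s (h 0)) (\<lambda>j. h (Suc j)) (Suc i)"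
    by (simp only: mining_run.simps)
  also have "\<dots> = mining_step (mining_run (mining_step s (h 0)) (\<lambda>j. h (Suc j)) i) (h (Suc i))"
    by (simp only: Suc.IH)
  also have "\<dots> = mining_step (mining_run s h (Suc i)) (h (Suc i))"
    by (simp only: mining_run.simps)
  finally show ?case .
qed simp

lemma mining_state_eq_mining_run: "mining_state phi M R Dc Ds h i = mining_run (0, 0) h i"
  by (induction i)
    (auto simp del: mining_run.simps(2) simp: mining_run_Suc_last mining_step_def split: prod.split)

lemma mining_run_offset:
  "mining_run (n, S) h i = (n + fst (mining_run (0, S) h i), snd (mining_run (0, S) h i))"
proof (induction i arbitrary: n S h)
  case (Suc i)
  obtain a b where ab: "mining_step (0, S) (h 0) = (a, b)" by force
  then have "mining_step (n, S) (h 0) = (n + a, b)"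
    by (auto simp: mining_step_def split: if_splits)
  then show ?case using Suc[of "n + a" b] Suc[of a b] ab by simp
qed simp

fun truncated_time :: "nat \<Rightarrow> nat \<Rightarrow> real \<Rightarrow> (nat \<Rightarrow> real) \<Rightarrow> ennreal" where
  "truncated_time 0 k S h = 0"
| "truncated_time (Suc N) 0 S h = 0"
| "truncated_time (Suc N) (Suc k) S h = 1 +
     (if h 0 \<le> M * phi (R + S) / Dc
      then (if h 0 \<le> M * phi (R + S) / Ds then truncated_time N k (S + R) (\<lambda>j. h (Suc j))
            else truncated_time N k S (\<lambda>j. h (Suc j)))
      else truncated_time N (Suc k) S (\<lambda>j. h (Suc j)))"

lemma truncated_time_vanishes:
  "truncated_time 0 k S = (\<lambda>_. 0)" "truncated_time N 0 S = (\<lambda>_. 0)"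
  by (auto intro: truncated_time.elims)

lemma truncated_time_eq_count:
  "truncated_time N k S h = (\<Sum>i<N. if fst (mining_run (0, S) h i) < k then 1 else 0)"
proof (induction N k S h rule: truncated_time.induct)
  case (3 N k S h)
  let ?first = "mining_step (0, S) (h 0)"
  have "fst ?first \<le> 1"
    by (simp add: mining_step_def)
  have count_shift: "fst (mining_run ?first (\<lambda>j. h (Suc j)) i) < Suc k \<longleftrightarrow>
      fst (mining_run (0, snd ?first) (\<lambda>j. h (Suc j)) i) < Suc k - fst ?first" for i
    using mining_run_offset[of "fst ?first" "snd ?first" "\<lambda>j. h (Suc j)" i] \<open>fst ?first \<le> 1\<close>
    by (simp, linarith)
  have "(\<Sum>i<Suc N. if fst (mining_run (0, S) h i) < Suc k then 1 else 0 :: ennreal) =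
      1 + (\<Sum>i<N. if fst (mining_run ?first (\<lambda>j. h (Suc j)) i) < Suc k then 1 else 0)"
    unfolding sum.lessThan_Suc_shift by simp
  with 3 show ?case
    unfolding count_shift by (simp add: mining_step_def)
qed simp_all

lemma mining_time_eq_SUP_truncated_time:
  "mining_time phi M R Dc Ds L h = (SUP N. truncated_time N L 0 h)"
proof -
  define blocks where "blocks i = fst (mining_state phi M R Dc Ds h i)" for i
  have truncated: "truncated_time N L 0 h = (\<Sum>i<N. if blocks i < L then 1 else 0)" for N
    by (simp add: truncated_time_eq_count blocks_def mining_state_eq_mining_run)
  have "mono blocks"
    unfolding mono_iff_le_Suc by (auto simp: blocks_def split: prod.split)
  show ?thesis
  proof (cases "\<exists>i. L \<le> blocks i")
    case True
    define m where "m = (LEAST i. L \<le> blocks i)"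
    have "L \<le> blocks m"
      unfolding m_def using True by (rule LeastI_ex)
    then have "blocks i < L \<longleftrightarrow> i < m" for i
      using monoD[OF \<open>mono blocks\<close>, of m i] not_less_Least[of i "\<lambda>i. L \<le> blocks i"]
      unfolding m_def by (meson le_trans not_le)
    then have "truncated_time N L 0 h = of_nat (min N m)" for N
      unfolding truncated by (induction N) (auto simp: min_def)
    moreover have "(SUP N. of_nat (min N m) :: ennreal) = of_nat m"
      by (intro antisym SUP_least SUP_upper2[of m]) auto
    ultimately show ?thesis
      using True by (simp add: mining_time_def m_def blocks_def)
  next
    case False
    then have "truncated_time N L 0 h = of_nat N" for N
      unfolding truncated by (simp add: not_le)
    with False show ?thesis
      by (simp add: mining_time_def blocks_def ennreal_SUP_of_nat_eq_top)
  qed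
qed

lemma incseq_truncated_time: "incseq (\<lambda>N. truncated_time N k S)"
  by (rule incseq_SucI) (simp add: le_fun_def truncated_time_eq_count)

lemma truncated_time_measurable:
  "truncated_time N k S \<in> borel_measurable (hash_space M')"
proof (induction N arbitrary: k S)
  case (Suc N)
  note [measurable] = measurable_compose[OF measurable_hash_space_shift Suc.IH]
    measurable_hash_space_head
  show ?case
  proof (cases k)
    case (Suc k')
    have "truncated_time (Suc N) k S = (\<lambda>h. 1 +
       (if h 0 \<le> M * phi (R + S) / Dc
        then (if h 0 \<le> M * phi (R + S) / Ds then truncated_time N k' (S + R) (\<lambda>j. h (Suc j))
              else truncated_time N k' S (\<lambda>j. h (Suc j)))
        else truncated_time N (Suc k') S (\<lambda>j. h (Suc j))))"
      using Suc by (simp add: fun_eq_iff)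
    also have "\<dots> \<in> borel_measurable (hash_space M')"
      by measurable
    finally show ?thesis .
  qed (simp add: truncated_time_vanishes)
qed (simp add: truncated_time_vanishes)

lemma nn_integral_truncated_time_Suc:
  assumes M: "M > 0" and Dc: "0 < Dc" "Dc \<le> Ds"
    and p: "0 < phi (R + S)" "phi (R + S) \<le> Dc"
  shows "(\<integral>\<^sup>+h. truncated_time (Suc N) (Suc k) S h \<partial>hash_space M) =
     1 + ennreal (phi (R + S) / Ds) * (\<integral>\<^sup>+h. truncated_time N k (S + R) h \<partial>hash_space M)
       + ennreal (phi (R + S) / Dc - phi (R + S) / Ds) * (\<integral>\<^sup>+h. truncated_time N k S h \<partial>hash_space M)
       + ennreal (1 - phi (R + S) / Dc) * (\<integral>\<^sup>+h. truncated_time N (Suc k) S h \<partial>hash_space M)"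
proof -
  let ?U = "uniform_measure lborel {0..M}"
  let ?H = "hash_space M"
  define a where "a = (\<integral>\<^sup>+h. truncated_time N k (S + R) h \<partial>?H)"
  define b where "b = (\<integral>\<^sup>+h. truncated_time N k S h \<partial>?H)"
  define c where "c = (\<integral>\<^sup>+h. truncated_time N (Suc k) S h \<partial>?H)"
  define ts where "ts = M * phi (R + S) / Ds"
  define tc where "tc = M * phi (R + S) / Dc"
  have ts: "0 \<le> ts" "ts \<le> tc" "tc \<le> M"
    unfolding ts_def tc_def using M p Dc
    by (auto intro!: divide_left_mono mult_pos_pos simp: field_simps)
  interpret H: prob_space ?H
    using M by (rule prob_space_hash_space)
  interpret U: prob_space ?U
    by (rule prob_space_uniform_measure) (use M in auto)
  note [measurable] = truncated_time_measurable
  have first_hash: "(\<integral>\<^sup>+h. truncated_time (Suc N) (Suc k) S (case_nat x h) \<partial>?H) =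
      1 + a * indicator {..ts} x + b * indicator {ts<..tc} x + c * indicator {tc<..} x" for x
    using ts(2)
    by (cases "x \<le> tc"; cases "x \<le> ts")
      (simp_all add: ts_def tc_def a_def b_def c_def nn_integral_add H.emeasure_space_1
        indicator_def cong: if_cong)
  have "(\<integral>\<^sup>+h. truncated_time (Suc N) (Suc k) S h \<partial>?H) =
      (\<integral>\<^sup>+x. 1 + a * indicator {..ts} x + b * indicator {ts<..tc} x + c * indicator {tc<..} x \<partial>?U)"
    unfolding nn_integral_hash_space_case_nat[OF M truncated_time_measurable] first_hash ..
  also have "\<dots> = 1 + a * emeasure ?U {..ts} + b * emeasure ?U {ts<..tc} + c * emeasure ?U {tc<..}"
    using U.emeasure_space_1
    by (simp del: emeasure_uniform_measure add: nn_integral_add nn_integral_cmult_indicator)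
  also have "\<dots> = 1 + a * ennreal (ts / M) + b * ennreal ((tc - ts) / M) + c * ennreal ((M - tc) / M)"
    using emeasure_uniform_interval_pieces[OF M ts] by simp
  also have "\<dots> = 1 + ennreal (phi (R + S) / Ds) * a
      + ennreal (phi (R + S) / Dc - phi (R + S) / Ds) * b + ennreal (1 - phi (R + S) / Dc) * c"
  proof -
    have "ts / M = phi (R + S) / Ds" "(tc - ts) / M = phi (R + S) / Dc - phi (R + S) / Ds"
      "(M - tc) / M = 1 - phi (R + S) / Dc"
      using M by (simp_all add: ts_def tc_def field_simps)
    then show ?thesis by (simp add: mult.commute)
  qed
  finally show ?thesis
    by (simp add: a_def b_def c_def)
qed

definition time_bound :: "nat \<Rightarrow> real \<Rightarrow> real" where
  "time_bound k S = Ds * (\<Sum>n<k. 1 / phi (R * real (Suc n) + S))"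

lemma time_bound_nonneg:
  assumes "0 \<le> Ds" "\<forall>m<k. 0 < phi (R * real (Suc m) + S)"
  shows "0 \<le> time_bound k S"
  unfolding time_bound_def using assms by (intro mult_nonneg_nonneg sum_nonneg) (auto simp: less_imp_le)

lemma time_bound_first_step:
  assumes Dc: "0 < Dc" "Dc \<le> Ds" and p: "0 < phi (R + S)"
    and last: "0 \<le> phi (R * real (Suc k) + S)"
  shows "1 + phi (R + S) / Ds * time_bound k (S + R)
      + (phi (R + S) / Dc - phi (R + S) / Ds) * time_bound k S
      + (1 - phi (R + S) / Dc) * time_bound (Suc k) S
    \<le> time_bound (Suc k) S"
proof -
  define p where "p = phi (R + S)"
  define f where "f n = 1 / phi (R * real (Suc n) + S)" for n
  define s where "s = (\<Sum>n<k. f (Suc n))"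
  have "f 0 = 1 / p"
    by (simp add: f_def p_def)
  then have "(\<Sum>n<k. f n) = 1 / p + s - f k"
    using sum.lessThan_Suc_shift[of f k] by (simp add: s_def)
  then have lower: "time_bound k S = Ds * (1 / p + s - f k)"
    by (simp add: time_bound_def f_def)
  have upper: "time_bound (Suc k) S = Ds * (1 / p + s)"
    unfolding time_bound_def sum.lessThan_Suc_shift f_def[symmetric] \<open>f 0 = 1 / p\<close> s_def ..
  have raised: "time_bound k (S + R) = Ds * s"
    unfolding time_bound_def s_def f_def by (simp add: algebra_simps)
  have slack: "1 + p / Ds * (Ds * s) + (p / Dc - p / Ds) * (Ds * (1 / p + s - f k))
      + (1 - p / Dc) * (Ds * (1 / p + s)) = Ds * (1 / p + s) - (Ds / Dc - 1) * p * f k"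
    using Dc p by (simp add: p_def field_simps)
  have "0 \<le> (Ds / Dc - 1) * p * f k"
    using Dc p last by (intro mult_nonneg_nonneg) (auto simp: p_def f_def field_simps)
  then show ?thesis
    unfolding lower upper raised p_def[symmetric] slack by simp
qed

lemma nn_integral_truncated_time_le:
  assumes M: "M > 0" and Dc: "0 < Dc" "Dc \<le> Ds"
    and phi: "\<forall>m<k. 0 < phi (R * real (Suc m) + S) \<and> phi (R * real (Suc m) + S) \<le> Dc"
  shows "(\<integral>\<^sup>+h. truncated_time N k S h \<partial>hash_space M) \<le> ennreal (time_bound k S)"
  using phi
proof (induction N arbitrary: k S)
  case (Suc N)
  show ?case
  proof (cases k)
    case (Suc k')
    define p where "p = phi (R + S)"
    have p: "0 < p" "p \<le> Dc"
      using Suc.prems \<open>k = Suc k'\<close> by (auto simp: p_def dest: spec[of _ 0])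
    have phi_raised:
      "\<forall>m<k'. 0 < phi (R * real (Suc m) + (S + R)) \<and> phi (R * real (Suc m) + (S + R)) \<le> Dc"
    proof (intro allI impI)
      fix m assume "m < k'"
      then have "Suc m < k" using \<open>k = Suc k'\<close> by simp
      moreover have "R * real (Suc m) + (S + R) = R * real (Suc (Suc m)) + S"
        by (simp add: algebra_simps)
      ultimately show "0 < phi (R * real (Suc m) + (S + R)) \<and> phi (R * real (Suc m) + (S + R)) \<le> Dc"
        using Suc.prems by presburger
    qed
    have phi_same: "\<forall>m<k'. 0 < phi (R * real (Suc m) + S) \<and> phi (R * real (Suc m) + S) \<le> Dc"
      using Suc.prems \<open>k = Suc k'\<close> by auto
    have weights: "0 \<le> p / Ds" "0 \<le> p / Dc - p / Ds" "0 \<le> 1 - p / Dc"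
      using p Dc by (auto simp: frac_le)
    have bounds: "0 \<le> time_bound k' (S + R)" "0 \<le> time_bound k' S" "0 \<le> time_bound k S"
      using phi_raised phi_same Suc.prems Dc by (auto intro: time_bound_nonneg)
    have "(\<integral>\<^sup>+h. truncated_time (Suc N) k S h \<partial>hash_space M) =
        1 + ennreal (p / Ds) * (\<integral>\<^sup>+h. truncated_time N k' (S + R) h \<partial>hash_space M)
          + ennreal (p / Dc - p / Ds) * (\<integral>\<^sup>+h. truncated_time N k' S h \<partial>hash_space M)
          + ennreal (1 - p / Dc) * (\<integral>\<^sup>+h. truncated_time N k S h \<partial>hash_space M)"
      unfolding \<open>k = Suc k'\<close> p_def using M Dc p
      by (intro nn_integral_truncated_time_Suc) (auto simp: p_def)
    also have "\<dots> \<le> 1 + ennreal (p / Ds) * ennreal (time_bound k' (S + R))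
          + ennreal (p / Dc - p / Ds) * ennreal (time_bound k' S)
          + ennreal (1 - p / Dc) * ennreal (time_bound k S)"
      using Suc.IH phi_raised phi_same Suc.prems by (intro add_mono mult_left_mono order_refl) auto
    also have "\<dots> = ennreal (1 + p / Ds * time_bound k' (S + R)
          + (p / Dc - p / Ds) * time_bound k' S + (1 - p / Dc) * time_bound k S)"
      using weights bounds mult_nonneg_nonneg[OF weights(1) bounds(1)]
        mult_nonneg_nonneg[OF weights(2) bounds(2)] mult_nonneg_nonneg[OF weights(3) bounds(3)]
      by (simp add: ennreal_mult[symmetric] ennreal_plus)
    also have "\<dots> \<le> ennreal (time_bound k S)"
      using time_bound_first_step[OF Dc, of S k'] p Suc.prems \<open>k = Suc k'\<close>
      by (intro ennreal_leI) (auto simp: p_def less_imp_le)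
    finally show ?thesis .
  qed (simp add: truncated_time_vanishes)
qed (simp add: truncated_time_vanishes)

lemma nn_integral_mining_time_le:
  assumes "M > 0" "0 < Dc" "Dc \<le> Ds"
    and "\<forall>m<L. 0 < phi (R * real (Suc m)) \<and> phi (R * real (Suc m)) \<le> Dc"
  shows "(\<integral>\<^sup>+h. mining_time phi M R Dc Ds L h \<partial>hash_space M) \<le> ennreal (time_bound L 0)"
proof -
  have "(\<integral>\<^sup>+h. mining_time phi M R Dc Ds L h \<partial>hash_space M)
      = (SUP N. \<integral>\<^sup>+h. truncated_time N L 0 h \<partial>hash_space M)"
    unfolding mining_time_eq_SUP_truncated_time
    by (rule nn_integral_monotone_convergence_SUP)
      (auto intro: incseq_truncated_time truncated_time_measurable)
  also have "\<dots> \<le> ennreal (time_bound L 0)"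
    using assms by (intro SUP_least nn_integral_truncated_time_le) auto
  finally show ?thesis .
qed

end

theorem mainTheorem10:
  fixes M R Dc Ds :: real and L :: nat
  assumes "M > 0" and "R \<ge> 2" and "0 < Dc" and "Dc \<le> Ds" and "L \<ge> 1"
    and "\<forall>k < L. 0 < log 2 (R + real k * R) \<and> log 2 (R + real k * R) \<le> Dc"
  shows "(\<integral>\<^sup>+ h. mining_time (log 2) M R Dc Ds L h \<partial>hash_space M)
           \<le> ennreal (Ds * (\<Sum>n<L. 1 / (log 2 (real n + 1) + log 2 R)))"
proof -
  have stake: "R * real (Suc n) = (real n + 1) * R" for n
    by (simp add: algebra_simps)
  have "(\<integral>\<^sup>+ h. mining_time (log 2) M R Dc Ds L h \<partial>hash_space M)
      \<le> ennreal (time_bound (log 2) R Ds L 0)"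
    using assms by (intro nn_integral_mining_time_le) (auto simp: stake algebra_simps)
  also have "time_bound (log 2) R Ds L 0 = Ds * (\<Sum>n<L. 1 / (log 2 (real n + 1) + log 2 R))"
    using \<open>R \<ge> 2\<close> by (simp add: time_bound_def stake log_mult_pos add.commute)
  finally show ?thesis .
qed

end
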